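(* For any pair of probability distributions $P,Q$ on a common countable set, $$C(P,Q)\ \ge\ -\tfrac12\log\!\left(1-\big(d_{\mathrm{TV}}(P,Q)\big)^2\right),$$ and for each value $\varepsilon\in[0,1)$ of $d_{\mathrm{TV}}(P,Q)$ there exist $P,Q$ with $d_{\mathrm{TV}}(P,Q)=\varepsilon$ attaining equality.
   Context: $d_{\mathrm{TV}}(P,Q)=\frac12\sum_x |P(x)-Q(x)|$; the Chernoff information is $C(P,Q)=-\min_{\lambda\in[0,1]}\log\left(\sum_x P(x)^{\lambda}Q(x)^{1-\lambda}\right)$ (with $\log 0=-\infty$; the right-hand side is $+\infty$ when $d_{\mathrm{TV}}=1$). Logarithms are natural. *)

theory Defs
  imports "HOL-Probability.Probability_Mass_Function" "HOL-Analysis.Infinite_Sum"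
begin

definition dTV :: "'a pmf \<Rightarrow> 'a pmf \<Rightarrow> real" where
  "dTV P Q = (1/2) * (\<Sum>\<^sub>\<infinity>x. \<bar>pmf P x - pmf Q x\<bar>)"

text \<open>The sum  sum_x P(x)^l Q(x)^(1-l)  (with 0 powr a = 0).\<close>
definition chernoff_sum :: "'a pmf \<Rightarrow> 'a pmf \<Rightarrow> real \<Rightarrow> real" where
  "chernoff_sum P Q l = (\<Sum>\<^sub>\<infinity>x. pmf P x powr l * pmf Q x powr (1 - l))"

definition neg_ln :: "real \<Rightarrow> ereal" where
  "neg_ln x = (if x \<le> 0 then \<infinity> else ereal (- ln x))"

text \<open>Chernoff information: -min over l in [0,1] of log(sum), i.e. the sup of -log(sum).\<close>
definition chernoff_info :: "'a pmf \<Rightarrow> 'a pmf \<Rightarrow> ereal" where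
  "chernoff_info P Q = (SUP l\<in>{0..1}. neg_ln (chernoff_sum P Q l))"

end

theory Submission
  imports Defs
begin

text \<open>At \<open>\<lambda> = 1/2\<close> the Chernoff sum is the Bhattacharyya coefficient \<open>\<Sum> \<surd>(P x Q x)\<close>.
  Writing \<open>\<surd>(P x Q x) = \<surd>(min \<cdot> max)\<close> and applying AM-GM with weights \<open>t\<close>, \<open>1/t\<close> gives
  \<open>\<Sum> \<surd>(P x Q x) \<le> (t (1 - d) + (1 + d) / t) / 2\<close> with \<open>d = d\<^sub>T\<^sub>V(P, Q)\<close>, because
  \<open>\<Sum> min = 1 - d\<close> and \<open>\<Sum> max = 1 + d\<close>; optimising over \<open>t\<close> yields \<open>\<surd>(1 - d\<^sup>2)\<close>.
  Equality is attained by the Bernoulli pair \<open>((1 + d)/2, (1 - d)/2)\<close>, whose Chernoff sum is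
  minimised at \<open>\<lambda> = 1/2\<close> by symmetry.\<close>

lemma has_sum_pmf: "(pmf P has_sum 1) UNIV"
proof -
  have "Infinite_Sum.abs_summable_on (pmf P) UNIV"
    using pmf_abs_summable abs_summable_equivalent by blast
  then have "pmf P summable_on UNIV"
    using summable_on_iff_abs_summable_on_real by blast
  moreover have "infsum (pmf P) UNIV = 1"
    using infsetsum_infsum[OF pmf_abs_summable, of P UNIV] infsetsum_pmf_eq_1[of P UNIV] by simp
  ultimately show ?thesis
    using has_sum_infsum by fastforce
qed

lemma has_sum_abs_diff_pmf: "((\<lambda>x. \<bar>pmf P x - pmf Q x\<bar>) has_sum 2 * dTV P Q) UNIV"
proof -
  have "(\<lambda>x. pmf P x + pmf Q x) summable_on UNIV"
    using has_sum_add[OF has_sum_pmf has_sum_pmf] by (auto simp: summable_on_def)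
  then have "(\<lambda>x. \<bar>pmf P x - pmf Q x\<bar>) summable_on UNIV"
    by (rule summable_on_comparison_test) (auto simp: abs_le_iff)
  then show ?thesis
    unfolding dTV_def by simp
qed

text \<open>AM-GM on \<open>(t \<cdot> min p q) (max p q / t)\<close>, rewritten linearly in \<open>p + q\<close> and \<open>\<bar>p - q\<bar>\<close>
  so that it can be summed against the total variation distance.\<close>
lemma sqrt_mult_le_weighted:
  fixes p q t :: real
  assumes "0 \<le> p" "0 \<le> q" "0 < t"
  shows "sqrt (p * q) \<le> (t + 1/t)/4 * (p + q) + (1/t - t)/4 * \<bar>p - q\<bar>"
proof -
  have "sqrt (p * q) = sqrt ((t * min p q) * (max p q / t))"
    using assms by (simp add: min_def max_def mult.commute)
  also have "\<dots> \<le> (t * min p q + max p q / t) / 2"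
    using assms by (intro arith_geo_mean_sqrt) auto
  also have "\<dots> = (t + 1/t)/4 * (p + q) + (1/t - t)/4 * \<bar>p - q\<bar>"
    using assms by (auto simp: min_def max_def field_simps)
  finally show ?thesis .
qed

lemma chernoff_sum_half_le:
  assumes "0 < t"
  shows "chernoff_sum P Q (1/2) \<le> (t * (1 - dTV P Q) + (1 + dTV P Q) / t) / 2"
proof -
  define bound where
    "bound x = (t + 1/t)/4 * (pmf P x + pmf Q x) + (1/t - t)/4 * \<bar>pmf P x - pmf Q x\<bar>" for x
  have bound_sum: "(bound has_sum (t + 1/t)/4 * 2 + (1/t - t)/4 * (2 * dTV P Q)) UNIV"
    unfolding bound_def
    by (rule has_sum_add[OF has_sum_cmult_right has_sum_cmult_right[OF has_sum_abs_diff_pmf]])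
       (use has_sum_add[OF has_sum_pmf has_sum_pmf, of P Q] in simp)
  have pointwise: "sqrt (pmf P x * pmf Q x) \<le> bound x" for x
    unfolding bound_def using assms by (intro sqrt_mult_le_weighted) auto
  have bound_summable: "bound summable_on UNIV"
    using bound_sum by (rule has_sum_imp_summable)
  then have "(\<lambda>x. sqrt (pmf P x * pmf Q x)) summable_on UNIV"
    by (rule summable_on_comparison_test) (simp_all add: pointwise)
  then have "(\<Sum>\<^sub>\<infinity>x. sqrt (pmf P x * pmf Q x)) \<le> infsum bound UNIV"
    using bound_summable by (rule infsum_mono) (simp add: pointwise)
  moreover have "chernoff_sum P Q (1/2) = (\<Sum>\<^sub>\<infinity>x. sqrt (pmf P x * pmf Q x))"
    unfolding chernoff_sum_def by (simp add: powr_half_sqrt real_sqrt_mult)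
  ultimately have "chernoff_sum P Q (1/2) \<le> (t + 1/t)/4 * 2 + (1/t - t)/4 * (2 * dTV P Q)"
    using infsumI[OF bound_sum] by simp
  also have "\<dots> = (t * (1 - dTV P Q) + (1 + dTV P Q) / t) / 2"
    using assms by (simp add: field_simps)
  finally show ?thesis .
qed

lemma dTV_le_1: "dTV P Q \<le> 1"
proof -
  have "2 * dTV P Q \<le> 1 + 1"
    using has_sum_abs_diff_pmf has_sum_add[OF has_sum_pmf has_sum_pmf, of P Q]
    by (rule has_sum_mono) (auto simp: abs_le_iff)
  then show ?thesis by simp
qed

lemma dTV_nonneg: "0 \<le> dTV P Q"
  unfolding dTV_def by (simp add: infsum_nonneg)

text \<open>Optimising \<open>t\<close> in a family of weighted AM-GM bounds: the choice \<open>t = v / B\<close> suffices.\<close>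
lemma le_sqrt_of_le_weighted_means:
  fixes B u v :: real
  assumes "0 \<le> u" "0 < v" and bound: "\<And>t. 0 < t \<Longrightarrow> B \<le> (t * u + v / t) / 2"
  shows "B \<le> sqrt (u * v)"
proof (cases "B \<le> 0")
  case True
  then show ?thesis using assms by (meson order_trans real_sqrt_ge_zero zero_le_mult_iff less_imp_le)
next
  case False
  then have "B \<le> (v / B * u + v / (v / B)) / 2"
    using assms by (intro bound) simp
  then have "B * B \<le> u * v"
    using False \<open>0 < v\<close> by (simp add: field_simps)
  then show ?thesis
    by (intro real_le_rsqrt) (simp add: power2_eq_square)
qed

lemma chernoff_sum_half_le_sqrt: "chernoff_sum P Q (1/2) \<le> sqrt (1 - (dTV P Q)^2)"
proof -
  have "chernoff_sum P Q (1/2) \<le> sqrt ((1 - dTV P Q) * (1 + dTV P Q))"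
    using dTV_le_1[of P Q] dTV_nonneg[of P Q] chernoff_sum_half_le
    by (intro le_sqrt_of_le_weighted_means) auto
  then show ?thesis
    by (simp add: power2_eq_square algebra_simps)
qed

lemma neg_ln_antimono: "x \<le> y \<Longrightarrow> neg_ln y \<le> neg_ln x"
  by (auto simp: neg_ln_def)

lemma neg_ln_sqrt: "neg_ln (sqrt x) = ereal (1/2) * neg_ln x"
  by (auto simp: neg_ln_def ln_sqrt)

lemma neg_ln_chernoff_sum_le_chernoff_info:
  "l \<in> {0..1} \<Longrightarrow> neg_ln (chernoff_sum P Q l) \<le> chernoff_info P Q"
  unfolding chernoff_info_def by (rule SUP_upper)

lemma chernoff_info_ge_dTV: "ereal (1/2) * neg_ln (1 - (dTV P Q)^2) \<le> chernoff_info P Q"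
proof -
  have "ereal (1/2) * neg_ln (1 - (dTV P Q)^2) \<le> neg_ln (chernoff_sum P Q (1/2))"
    unfolding neg_ln_sqrt[symmetric] by (intro neg_ln_antimono chernoff_sum_half_le_sqrt)
  also have "\<dots> \<le> chernoff_info P Q"
    by (intro neg_ln_chernoff_sum_le_chernoff_info) simp
  finally show ?thesis .
qed

lemma dTV_bernoulli:
  assumes "a \<in> {0..1}" "b \<in> {0..1}"
  shows "dTV (bernoulli_pmf a) (bernoulli_pmf b) = \<bar>a - b\<bar>"
proof -
  have "dTV (bernoulli_pmf a) (bernoulli_pmf b) = (\<bar>a - b\<bar> + \<bar>(1 - a) - (1 - b)\<bar>) / 2"
    using assms by (simp add: dTV_def UNIV_bool)
  then show ?thesis by simp
qed

lemma chernoff_sum_bernoulli: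
  assumes "a \<in> {0..1}" "b \<in> {0..1}"
  shows "chernoff_sum (bernoulli_pmf a) (bernoulli_pmf b) l
           = a powr l * b powr (1 - l) + (1 - a) powr l * (1 - b) powr (1 - l)"
  using assms by (simp add: chernoff_sum_def UNIV_bool)

lemma chernoff_info_eqI:
  assumes "l\<^sub>0 \<in> {0..1}" "chernoff_sum P Q l\<^sub>0 = m"
    and "\<And>l. l \<in> {0..1} \<Longrightarrow> m \<le> chernoff_sum P Q l"
  shows "chernoff_info P Q = neg_ln m"
proof (rule antisym)
  show "chernoff_info P Q \<le> neg_ln m"
    unfolding chernoff_info_def using assms(3) by (intro SUP_least neg_ln_antimono)
  show "neg_ln m \<le> chernoff_info P Q"
    using neg_ln_chernoff_sum_le_chernoff_info[OF assms(1), of P Q] assms(2) by simp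
qed

text \<open>For the pair \<open>(a, 1 - a)\<close> the two terms of the Chernoff sum have the constant product
  \<open>a (1 - a)\<close>, so by AM-GM the sum is minimal at \<open>l = 1/2\<close>, where the terms coincide.\<close>
lemma chernoff_info_bernoulli_complement:
  assumes "0 < a" "a < 1"
  shows "chernoff_info (bernoulli_pmf a) (bernoulli_pmf (1 - a)) = neg_ln (2 * sqrt (a * (1 - a)))"
proof (rule chernoff_info_eqI)
  show "chernoff_sum (bernoulli_pmf a) (bernoulli_pmf (1 - a)) (1/2) = 2 * sqrt (a * (1 - a))"
    using assms by (simp add: chernoff_sum_bernoulli powr_half_sqrt real_sqrt_mult)
next
  fix l :: real
  define x where "x = a powr l * (1 - a) powr (1 - l)"
  define y where "y = (1 - a) powr l * a powr (1 - l)"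
  have "x * y = (a powr l * a powr (1 - l)) * ((1 - a) powr l * (1 - a) powr (1 - l))"
    unfolding x_def y_def by (simp add: algebra_simps)
  also have "\<dots> = a * (1 - a)"
    using assms by (simp add: powr_add[symmetric])
  finally have "sqrt (a * (1 - a)) \<le> (x + y) / 2"
    unfolding x_def y_def by (metis arith_geo_mean_sqrt powr_ge_zero zero_le_mult_iff)
  then show "2 * sqrt (a * (1 - a)) \<le> chernoff_sum (bernoulli_pmf a) (bernoulli_pmf (1 - a)) l"
    using assms by (simp add: chernoff_sum_bernoulli x_def y_def)
qed simp

lemma chernoff_info_tight:
  assumes "0 \<le> \<epsilon>" "\<epsilon> < 1"
  defines "a \<equiv> (1 + \<epsilon>) / 2"
  shows "dTV (bernoulli_pmf a) (bernoulli_pmf (1 - a)) = \<epsilon>"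
    and "chernoff_info (bernoulli_pmf a) (bernoulli_pmf (1 - a)) = ereal (1/2) * neg_ln (1 - \<epsilon>^2)"
proof -
  show "dTV (bernoulli_pmf a) (bernoulli_pmf (1 - a)) = \<epsilon>"
    using assms by (simp add: dTV_bernoulli)
  have "2 * sqrt (a * (1 - a)) = sqrt (4 * (a * (1 - a)))"
    by (simp add: real_sqrt_mult)
  also have "4 * (a * (1 - a)) = 1 - \<epsilon>^2"
    by (simp add: a_def field_simps power2_eq_square)
  finally have "2 * sqrt (a * (1 - a)) = sqrt (1 - \<epsilon>^2)" .
  moreover have "0 < a" "a < 1"
    using assms by auto
  ultimately show "chernoff_info (bernoulli_pmf a) (bernoulli_pmf (1 - a)) = ereal (1/2) * neg_ln (1 - \<epsilon>^2)"
    by (simp add: chernoff_info_bernoulli_complement neg_ln_sqrt)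
qed

theorem corollary1:
  shows "(\<forall>(P :: 'a::countable pmf) Q.
            chernoff_info P Q \<ge> ereal (1/2) * neg_ln (1 - (dTV P Q)^2))
       \<and> (\<forall>\<epsilon>::real. 0 \<le> \<epsilon> \<and> \<epsilon> < 1 \<longrightarrow>
            (\<exists>P Q :: bool pmf. dTV P Q = \<epsilon> \<and>
               chernoff_info P Q = ereal (1/2) * neg_ln (1 - \<epsilon>^2)))"
  using chernoff_info_ge_dTV chernoff_info_tight by blast

end
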